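(* Let $\kappa>0$ be sufficiently small and define $F_1:\mathbb{R}\to\mathbb{R}$ by $F_1(0)=0$, $F_1(s)=-\frac12 s^2\log s^2$ for $0<|s|<\kappa$, and $F_1(s)=-\frac12 s^2(\log\kappa^2+3)+2\kappa|s|-\frac{\kappa^2}{2}$ for $|s|\ge\kappa$. Then $F_1$ is an N-function, and both $F_1$ and its conjugate function $\tilde F_1$ satisfy the $\Delta_2$-condition.
   Context: A continuous $\Phi:\mathbb{R}\to[0,\infty)$ is an N-function if it is convex, even, $\Phi(t)=0\iff t=0$, $\lim_{t\to0}\Phi(t)/t=0$ and $\lim_{t\to\infty}\Phi(t)/t=+\infty$. $\Phi$ satisfies the $\Delta_2$-condition if there is $k>0$ with $\Phi(2t)\le k\Phi(t)$ for all $t\ge0$. The conjugate is $\tilde\Phi(s)=\max_{t\ge0}\{st-\Phi(t)\}$, $s\ge 0$. *)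

theory Defs
  imports "HOL-Analysis.Analysis"
begin

definition N_function :: "(real \<Rightarrow> real) \<Rightarrow> bool" where
  "N_function \<Phi> \<longleftrightarrow>
     continuous_on UNIV \<Phi> \<and>
     (\<forall>t. \<Phi> t \<ge> 0) \<and>
     convex_on UNIV \<Phi> \<and>
     (\<forall>t. \<Phi> (- t) = \<Phi> t) \<and>
     (\<forall>t. \<Phi> t = 0 \<longleftrightarrow> t = 0) \<and>
     ((\<lambda>t. \<Phi> t / t) \<longlongrightarrow> 0) (at 0) \<and>
     filterlim (\<lambda>t. \<Phi> t / t) at_top at_top"

definition Delta2 :: "(real \<Rightarrow> real) \<Rightarrow> bool" where
  "Delta2 \<Phi> \<longleftrightarrow> (\<exists>k>0. \<forall>t\<ge>0. \<Phi> (2 * t) \<le> k * \<Phi> t)"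

text \<open>Conjugate (complementary) function; only its values for s \<ge> 0 are relevant.\<close>
definition conjugate :: "(real \<Rightarrow> real) \<Rightarrow> real \<Rightarrow> real" where
  "conjugate \<Phi> s = (SUP t\<in>{0..}. s * t - \<Phi> t)"

definition F1 :: "real \<Rightarrow> real \<Rightarrow> real" where
  "F1 \<kappa> s =
     (if s = 0 then 0
      else if \<bar>s\<bar> < \<kappa> then - (1/2) * s\<^sup>2 * ln (s\<^sup>2)
      else - (1/2) * s\<^sup>2 * (ln (\<kappa>\<^sup>2) + 3) + 2 * \<kappa> * \<bar>s\<bar> - \<kappa>\<^sup>2 / 2)"

end

theory Submission
  imports Defs "HOL-Real_Asymp.Real_Asymp"
begin

(* On (0, kappa] the function F1 is -t^2 ln t, and on [kappa, oo) it is the quadratic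
   a t^2 + 2 kappa t - kappa^2/2, a = -ln kappa - 3/2, which continues it in a C^1 way.
   For ln kappa < -6 the derivative on [0, oo) is nonnegative and nondecreasing (that of
   -t^2 ln t, namely -2 t ln t - t, increases while ln t <= -3/2), so the even function F1
   is convex; it is superlinear since a > 0, and F1 t / t -> 0 since t ln t -> 0.
   Delta2 for F1 and the growth bound 8 F1(t) <= F1(4t) are elementary inequalities on the
   two pieces; the latter yields Delta2 for the conjugate by rescaling t in its supremum. *)

lemma has_real_derivative_split:
  fixes f :: "real \<Rightarrow> real"
  assumes "(f has_real_derivative D) (at x within {..x})"
    and "(f has_real_derivative D) (at x within {x..})"
  shows "(f has_real_derivative D) (at x)"
  using assms unfolding has_field_derivative_iff by (rule Lim_Un_univ) auto

lemma mono_sgn_mult_abs: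
  fixes g :: "real \<Rightarrow> real"
  assumes mono: "mono_on {0..} g" and "g 0 = 0"
  shows "mono (\<lambda>s. sgn s * g \<bar>s\<bar>)"
proof (rule monoI)
  fix x y :: real
  assume "x \<le> y"
  have nonneg: "0 \<le> g t" if "0 \<le> t" for t
    using mono_onD[OF mono, of 0 t] that \<open>g 0 = 0\<close> by simp
  consider "0 \<le> x" | "y \<le> 0" | "x < 0" "0 < y"
    by linarith
  then show "sgn x * g \<bar>x\<bar> \<le> sgn y * g \<bar>y\<bar>"
  proof cases
    case 1
    then show ?thesis
      using mono_onD[OF mono, of x y] nonneg[of y] \<open>x \<le> y\<close> \<open>g 0 = 0\<close>
      by (cases "x = 0") (auto simp: sgn_if)
  next
    case 2
    then show ?thesis
      using mono_onD[OF mono, of "- y" "- x"] nonneg[of "- x"] \<open>x \<le> y\<close> \<open>g 0 = 0\<close>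
      by (cases "y = 0") (auto simp: sgn_if)
  next
    case 3
    then show ?thesis
      using nonneg[of "- x"] nonneg[of y] by (simp add: sgn_if)
  qed
qed

lemma bdd_above_conjugate:
  fixes \<Phi> :: "real \<Rightarrow> real"
  assumes nonneg: "\<And>t. 0 \<le> \<Phi> t"
    and superlinear: "filterlim (\<lambda>t. \<Phi> t / t) at_top at_top"
    and "0 \<le> s"
  shows "bdd_above ((\<lambda>t. s * t - \<Phi> t) ` {0..})"
proof -
  obtain T where T: "\<And>t. T \<le> t \<Longrightarrow> s \<le> \<Phi> t / t"
    using superlinear by (auto simp: filterlim_at_top eventually_at_top_linorder)
  define M where "M = max T 1"
  have "s * t - \<Phi> t \<le> s * M" if "0 \<le> t" for t
  proof (cases "t \<le> M")
    case True
    then show ?thesis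
      using mult_left_mono[OF True \<open>0 \<le> s\<close>] nonneg[of t] by linarith
  next
    case False
    then have "0 < t" and "s \<le> \<Phi> t / t"
      using T by (auto simp: M_def)
    then have "s * t \<le> \<Phi> t"
      by (simp add: le_divide_eq)
    moreover have "0 \<le> s * M"
      using \<open>0 \<le> s\<close> by (simp add: M_def)
    ultimately show ?thesis
      by linarith
  qed
  then show ?thesis
    by (intro bdd_aboveI2[where M = "s * M"]) simp
qed

(* The growth hypothesis is the nabla_2 condition, dual to Delta2 under conjugation. *)
lemma Delta2_conjugateI:
  fixes \<Phi> :: "real \<Rightarrow> real" and l :: real
  assumes "0 < l"
    and growth: "\<And>t. 0 \<le> t \<Longrightarrow> 2 * l * \<Phi> t \<le> \<Phi> (l * t)"
    and nonneg: "\<And>t. 0 \<le> \<Phi> t"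
    and superlinear: "filterlim (\<lambda>t. \<Phi> t / t) at_top at_top"
  shows "Delta2 (conjugate \<Phi>)"
  unfolding Delta2_def
proof (intro exI[of _ "2 * l"] conjI allI impI)
  show "0 < 2 * l"
    using \<open>0 < l\<close> by simp
  fix s :: real
  assume "0 \<le> s"
  show "conjugate \<Phi> (2 * s) \<le> 2 * l * conjugate \<Phi> s"
    unfolding conjugate_def
  proof (rule cSUP_least)
    fix t :: real
    assume "t \<in> {0..}"
    then have "0 \<le> t / l"
      using \<open>0 < l\<close> by simp
    have "2 * s * t - \<Phi> t = 2 * l * (s * (t / l)) - \<Phi> (l * (t / l))"
      using \<open>0 < l\<close> by simp
    also have "\<dots> \<le> 2 * l * (s * (t / l) - \<Phi> (t / l))"
      using growth[OF \<open>0 \<le> t / l\<close>] by (simp add: algebra_simps)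
    also have "\<dots> \<le> 2 * l * (SUP u\<in>{0..}. s * u - \<Phi> u)"
      using cSUP_upper[OF _ bdd_above_conjugate[OF nonneg superlinear \<open>0 \<le> s\<close>], of "t / l"]
        \<open>0 \<le> t / l\<close> \<open>0 < l\<close>
      by (intro mult_left_mono) auto
    finally show "2 * s * t - \<Phi> t \<le> 2 * l * (SUP u\<in>{0..}. s * u - \<Phi> u)" .
  qed simp
qed

lemma F1_minus: "F1 \<kappa> (- s) = F1 \<kappa> s"
  by (simp add: F1_def)

lemma F1_abs: "F1 \<kappa> \<bar>s\<bar> = F1 \<kappa> s"
  by (cases "0 \<le> s") (auto simp: F1_minus)

lemma F1_0 [simp]: "F1 \<kappa> 0 = 0"
  by (simp add: F1_def)

lemma F1_eq_small:
  assumes "0 < t" and "t \<le> \<kappa>"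
  shows "F1 \<kappa> t = - (t\<^sup>2) * ln t"
proof (cases "t < \<kappa>")
  case False
  then have "t = \<kappa>"
    using assms by simp
  then show ?thesis
    using assms by (simp add: F1_def ln_realpow algebra_simps) (simp add: power2_eq_square)
qed (use assms in \<open>simp add: F1_def ln_realpow\<close>)

lemma F1_eq_large:
  assumes "0 < \<kappa>" and "\<kappa> \<le> t"
  shows "F1 \<kappa> t = (- ln \<kappa> - 3/2) * t\<^sup>2 + 2 * \<kappa> * t - \<kappa>\<^sup>2 / 2"
  using assms by (simp add: F1_def ln_realpow algebra_simps)

lemma deriv_neg_sq_ln_mono:
  fixes x y :: real
  assumes "0 \<le> x" and "x \<le> y" and "ln y \<le> - 3/2"
  shows "- 2 * x * ln x - x \<le> - 2 * y * ln y - y"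
proof (cases "x = 0")
  case True
  then show ?thesis
    using assms mult_nonneg_nonneg[of y "- 2 * ln y - 1"] by (simp add: algebra_simps)
next
  case False
  then have "0 < x" "0 < y"
    using assms by linarith+
  have "ln (y / x) \<le> y / x - 1"
    using \<open>0 < x\<close> \<open>0 < y\<close> by (intro ln_le_minus_one) auto
  then have "x * (ln y - ln x) \<le> x * (y / x - 1)"
    using \<open>0 < x\<close> \<open>0 < y\<close> by (intro mult_left_mono) (auto simp: ln_div)
  then have "x * ln y - x * ln x \<le> y - x"
    using \<open>0 < x\<close> by (simp add: algebra_simps)
  moreover have "(y - x) * (2 * ln y + 3) \<le> 0"
    using assms by (intro mult_nonneg_nonpos) auto
  ultimately show ?thesis
    by (simp add: algebra_simps)
qed

(* At t = 0 the first branch is 0 only because ln 0 = 0 in HOL. *)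
definition F1_deriv_pos :: "real \<Rightarrow> real \<Rightarrow> real" where
  "F1_deriv_pos \<kappa> t =
     (if t < \<kappa> then - 2 * t * ln t - t else 2 * (- ln \<kappa> - 3/2) * t + 2 * \<kappa>)"

context
  fixes \<kappa> :: real
  assumes \<kappa>_pos: "0 < \<kappa>"
begin

lemma F1_has_derivative_pos:
  assumes "0 < t"
  shows "(F1 \<kappa> has_real_derivative F1_deriv_pos \<kappa> t) (at t)"
proof -
  have small: "((\<lambda>t. - (t\<^sup>2) * ln t) has_real_derivative - 2 * t * ln t - t) (at t)"
    using \<open>0 < t\<close> by (auto intro!: derivative_eq_intros simp: field_simps power2_eq_square)
  have large: "((\<lambda>t. (- ln \<kappa> - 3/2) * t\<^sup>2 + 2 * \<kappa> * t - \<kappa>\<^sup>2 / 2) has_real_derivative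
      2 * (- ln \<kappa> - 3/2) * t + 2 * \<kappa>) (at t)"
    by (auto intro!: derivative_eq_intros simp: field_simps power2_eq_square)
  consider "t < \<kappa>" | "t = \<kappa>" | "\<kappa> < t"
    by linarith
  then show ?thesis
  proof cases
    case 1
    then show ?thesis
      using has_field_derivative_transform_within_open[OF small, of "{0<..<\<kappa>}"] \<open>0 < t\<close>
      by (auto simp: F1_eq_small F1_deriv_pos_def)
  next
    case 3
    then show ?thesis
      using has_field_derivative_transform_within_open[OF large, of "{\<kappa><..}"] \<kappa>_pos
      by (auto simp: F1_eq_large F1_deriv_pos_def)
  next
    case 2
    have left: "(F1 \<kappa> has_real_derivative F1_deriv_pos \<kappa> t) (at t within {..t})"
    proof (rule has_field_derivative_transform_within[where d = \<kappa>])
      have "F1_deriv_pos \<kappa> t = - 2 * t * ln t - t"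
        using 2 by (simp add: F1_deriv_pos_def algebra_simps)
      then show "((\<lambda>t. - (t\<^sup>2) * ln t) has_real_derivative F1_deriv_pos \<kappa> t) (at t within {..t})"
        using has_field_derivative_at_within[OF small] by simp
      show "- (x\<^sup>2) * ln x = F1 \<kappa> x" if "x \<in> {..t}" and "dist x t < \<kappa>" for x
        using that 2 by (intro F1_eq_small[symmetric]) (auto simp: dist_real_def)
    qed (use \<kappa>_pos in auto)
    have right: "(F1 \<kappa> has_real_derivative F1_deriv_pos \<kappa> t) (at t within {t..})"
    proof (rule has_field_derivative_transform_within[where d = 1])
      show "((\<lambda>t. (- ln \<kappa> - 3/2) * t\<^sup>2 + 2 * \<kappa> * t - \<kappa>\<^sup>2 / 2) has_real_derivative
          F1_deriv_pos \<kappa> t) (at t within {t..})"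
        using has_field_derivative_at_within[OF large] 2 by (simp add: F1_deriv_pos_def)
    qed (use 2 \<kappa>_pos F1_eq_large in auto)
    show ?thesis
      using has_real_derivative_split[OF left right] .
  qed
qed

lemma F1_has_derivative_0: "(F1 \<kappa> has_real_derivative 0) (at 0)"
proof -
  have "((\<lambda>h::real. - (1/2) * h * ln (h\<^sup>2)) \<longlongrightarrow> 0) (at 0)"
    by real_asymp
  moreover have "eventually (\<lambda>h. h \<in> ball 0 \<kappa> - {0}) (at (0::real))"
    using \<kappa>_pos by (intro eventually_at_in_open) auto
  then have "eventually (\<lambda>h. - (1/2) * h * ln (h\<^sup>2) = (F1 \<kappa> (0 + h) - F1 \<kappa> 0) / h) (at 0)"
    by eventually_elim (auto simp: F1_def power2_eq_square)
  ultimately show ?thesis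
    unfolding DERIV_def by (rule Lim_transform_eventually)
qed

lemma F1_has_derivative: "(F1 \<kappa> has_real_derivative sgn s * F1_deriv_pos \<kappa> \<bar>s\<bar>) (at s)"
proof -
  consider "s = 0" | "0 < s" | "s < 0"
    by linarith
  then show ?thesis
  proof cases
    case 1
    then show ?thesis
      using F1_has_derivative_0 by simp
  next
    case 2
    then show ?thesis
      using F1_has_derivative_pos by simp
  next
    case 3
    then have "((\<lambda>x. F1 \<kappa> (- x)) has_real_derivative - F1_deriv_pos \<kappa> (- s)) (at s)"
      using F1_has_derivative_pos[of "- s"] DERIV_mirror by simp
    then show ?thesis
      using 3 by (simp add: F1_minus)
  qed
qed

lemma F1_divide_tendsto_0: "((\<lambda>t. F1 \<kappa> t / t) \<longlongrightarrow> 0) (at 0)"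
  using F1_has_derivative_0 unfolding DERIV_def by simp

context
  assumes \<kappa>_small: "ln \<kappa> < - 6"
begin

lemma F1_deriv_pos_mono: "mono_on {0..} (F1_deriv_pos \<kappa>)"
proof (rule mono_onI)
  fix x y :: real
  assume "x \<in> {0..}" and "x \<le> y"
  have large_mono: "2 * (- ln \<kappa> - 3/2) * p + 2 * \<kappa> \<le> 2 * (- ln \<kappa> - 3/2) * q + 2 * \<kappa>"
    if "p \<le> q" for p q :: real
    using that \<kappa>_small by (intro add_right_mono mult_left_mono) auto
  have small_mono: "- 2 * p * ln p - p \<le> - 2 * q * ln q - q"
    if "0 \<le> p" "p \<le> q" "q \<le> \<kappa>" for p q
  proof (cases "q = 0")
    case False
    then have "ln q \<le> ln \<kappa>"
      using that \<kappa>_pos by simp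
    then show ?thesis
      using that \<kappa>_small by (intro deriv_neg_sq_ln_mono) auto
  qed (use that in simp)
  consider "y < \<kappa>" | "x < \<kappa>" "\<kappa> \<le> y" | "\<kappa> \<le> x"
    by linarith
  then show "F1_deriv_pos \<kappa> x \<le> F1_deriv_pos \<kappa> y"
  proof cases
    case 1
    then show ?thesis
      using small_mono \<open>x \<in> {0..}\<close> \<open>x \<le> y\<close> by (simp add: F1_deriv_pos_def)
  next
    case 2
    have "- 2 * x * ln x - x \<le> - 2 * \<kappa> * ln \<kappa> - \<kappa>"
      using small_mono 2 \<open>x \<in> {0..}\<close> by simp
    also have "\<dots> = 2 * (- ln \<kappa> - 3/2) * \<kappa> + 2 * \<kappa>"
      by (simp add: algebra_simps)
    also have "\<dots> \<le> 2 * (- ln \<kappa> - 3/2) * y + 2 * \<kappa>"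
      using large_mono 2 by simp
    finally show ?thesis
      using 2 by (simp add: F1_deriv_pos_def)
  next
    case 3
    then show ?thesis
      using large_mono \<open>x \<le> y\<close> by (simp add: F1_deriv_pos_def)
  qed
qed

lemma F1_convex: "convex_on UNIV (F1 \<kappa>)"
proof (rule convex_on_realI[where f' = "\<lambda>s. sgn s * F1_deriv_pos \<kappa> \<bar>s\<bar>"])
  have "mono (\<lambda>s. sgn s * F1_deriv_pos \<kappa> \<bar>s\<bar>)"
    by (rule mono_sgn_mult_abs[OF F1_deriv_pos_mono]) (simp add: F1_deriv_pos_def \<kappa>_pos)
  then show "sgn x * F1_deriv_pos \<kappa> \<bar>x\<bar> \<le> sgn y * F1_deriv_pos \<kappa> \<bar>y\<bar>" if "x \<le> y" for x y
    using that by (rule monoD)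
qed (use F1_has_derivative in auto)

lemma F1_pos:
  assumes "s \<noteq> 0"
  shows "0 < F1 \<kappa> s"
proof -
  define t where "t = \<bar>s\<bar>"
  have "0 < t"
    using assms by (simp add: t_def)
  have "0 < F1 \<kappa> t"
  proof (cases "t \<le> \<kappa>")
    case True
    then have "ln t < 0"
      using \<open>0 < t\<close> \<kappa>_small ln_le_cancel_iff[of t \<kappa>] \<kappa>_pos by linarith
    then show ?thesis
      using F1_eq_small[OF \<open>0 < t\<close> True] \<open>0 < t\<close> by (simp add: mult_pos_neg)
  next
    case False
    then have "\<kappa>\<^sup>2 < \<kappa> * t"
      using \<kappa>_pos by (simp add: power2_eq_square)
    moreover have "0 \<le> (- ln \<kappa> - 3/2) * t\<^sup>2" and "0 < \<kappa>\<^sup>2"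
      using \<kappa>_small \<kappa>_pos by simp_all
    ultimately show ?thesis
      using F1_eq_large[of \<kappa> t] \<kappa>_pos False by linarith
  qed
  then show ?thesis
    by (simp add: t_def F1_abs)
qed

lemma F1_nonneg: "0 \<le> F1 \<kappa> s"
  using F1_pos[of s] by (cases "s = 0") auto

lemma F1_superlinear: "filterlim (\<lambda>t. F1 \<kappa> t / t) at_top at_top"
proof (rule filterlim_at_top_mono)
  show "filterlim (\<lambda>t. (- ln \<kappa> - 3/2) * t) at_top at_top"
    using \<kappa>_small by (intro filterlim_tendsto_pos_mult_at_top[OF tendsto_const _ filterlim_ident]) simp
  show "eventually (\<lambda>t. (- ln \<kappa> - 3/2) * t \<le> F1 \<kappa> t / t) at_top"
    using eventually_ge_at_top[of \<kappa>]
  proof eventually_elim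
    case (elim t)
    then have "0 < t" and "\<kappa>\<^sup>2 \<le> \<kappa> * t"
      using \<kappa>_pos by (simp_all add: power2_eq_square)
    then have "(- ln \<kappa> - 3/2) * t * t \<le> F1 \<kappa> t"
      using F1_eq_large[OF \<kappa>_pos elim] \<kappa>_pos by (simp add: power2_eq_square)
    then show ?case
      using \<open>0 < t\<close> by (simp add: pos_le_divide_eq)
  qed
qed

lemma N_function_F1: "N_function (F1 \<kappa>)"
  unfolding N_function_def
proof (intro conjI allI)
  show "continuous_on UNIV (F1 \<kappa>)"
    by (intro continuous_at_imp_continuous_on ballI DERIV_isCont[OF F1_has_derivative])
  show "F1 \<kappa> t = 0 \<longleftrightarrow> t = 0" for t
    using F1_pos[of t] by (cases "t = 0") auto
qed (use F1_nonneg F1_convex F1_minus F1_divide_tendsto_0 F1_superlinear in auto)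

lemma F1_doubling:
  assumes "0 \<le> t"
  shows "F1 \<kappa> (2 * t) \<le> 4 * F1 \<kappa> t"
proof -
  consider "t = 0" | "0 < t" "2 * t \<le> \<kappa>" | "\<kappa> \<le> t" | "0 < t" "t \<le> \<kappa>" "\<kappa> \<le> 2 * t"
    using assms by linarith
  then show ?thesis
  proof cases
    case 1
    then show ?thesis
      by simp
  next
    case 2
    have "F1 \<kappa> (2 * t) = - 4 * t\<^sup>2 * ln 2 - 4 * t\<^sup>2 * ln t"
      using 2 by (simp add: F1_eq_small ln_mult power2_eq_square algebra_simps)
    also have "\<dots> \<le> - 4 * t\<^sup>2 * ln t"
      by simp
    also have "\<dots> = 4 * F1 \<kappa> t"
      using 2 by (simp add: F1_eq_small)
    finally show ?thesis .
  next
    case 3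
    have "F1 \<kappa> (2 * t) = 4 * ((- ln \<kappa> - 3/2) * t\<^sup>2) + 4 * (\<kappa> * t) - \<kappa>\<^sup>2 / 2"
      using F1_eq_large[OF \<kappa>_pos, of "2 * t"] 3 \<kappa>_pos by (simp add: power_mult_distrib)
    moreover have "F1 \<kappa> t = (- ln \<kappa> - 3/2) * t\<^sup>2 + 2 * (\<kappa> * t) - \<kappa>\<^sup>2 / 2"
      using F1_eq_large[OF \<kappa>_pos 3] by simp
    moreover have "\<kappa>\<^sup>2 \<le> \<kappa> * t" and "0 \<le> \<kappa>\<^sup>2"
      using 3 \<kappa>_pos by (simp_all add: power2_eq_square)
    ultimately show ?thesis
      by linarith
  next
    case 4
    then have "t\<^sup>2 * (- ln \<kappa>) \<le> t\<^sup>2 * (- ln t)"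
      by (intro mult_left_mono) auto
    moreover have "0 \<le> (t - \<kappa> / 2) * (6 * t - \<kappa>)"
      using 4 \<kappa>_pos by (intro mult_nonneg_nonneg) auto
    ultimately show ?thesis
      using F1_eq_small[OF 4(1,2)] F1_eq_large[OF \<kappa>_pos 4(3)]
      by (simp add: power2_eq_square algebra_simps)
  qed
qed

lemma F1_quadrupling_growth:
  assumes "0 \<le> t"
  shows "8 * F1 \<kappa> t \<le> F1 \<kappa> (4 * t)"
proof -
  have ln4: "0 < ln (4::real)" "ln (4::real) \<le> 3"
    using ln_le_minus_one[of 4] by simp_all
  consider "t = 0" | "0 < t" "4 * t \<le> \<kappa>" | "\<kappa> \<le> t" | "0 < t" "t \<le> \<kappa>" "\<kappa> \<le> 4 * t"
    using assms by linarith
  then show ?thesis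
  proof cases
    case 1
    then show ?thesis
      by simp
  next
    case 2
    then have "ln t < ln \<kappa>"
      by simp
    then have "0 \<le> t\<^sup>2 * (- ln t - 2 * ln 4)"
      using \<kappa>_small ln4 by (intro mult_nonneg_nonneg) auto
    moreover have "ln (4 * t) = ln 4 + ln t"
      using 2 by (simp add: ln_mult)
    ultimately show ?thesis
      using F1_eq_small[of t \<kappa>] F1_eq_small[of "4 * t" \<kappa>] 2
      by (simp add: power2_eq_square algebra_simps)
  next
    case 3
    have "F1 \<kappa> (4 * t) = 16 * ((- ln \<kappa> - 3/2) * t\<^sup>2) + 8 * (\<kappa> * t) - \<kappa>\<^sup>2 / 2"
      using F1_eq_large[OF \<kappa>_pos, of "4 * t"] 3 \<kappa>_pos by (simp add: power_mult_distrib)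
    moreover have "F1 \<kappa> t = (- ln \<kappa> - 3/2) * t\<^sup>2 + 2 * (\<kappa> * t) - \<kappa>\<^sup>2 / 2"
      using F1_eq_large[OF \<kappa>_pos 3] by simp
    moreover have "t\<^sup>2 \<le> (- ln \<kappa> - 3/2) * t\<^sup>2"
      using mult_right_mono[of 1 "- ln \<kappa> - 3/2" "t\<^sup>2"] \<kappa>_small by simp
    moreover have "\<kappa> * t \<le> t\<^sup>2" and "0 \<le> \<kappa>\<^sup>2"
      using 3 \<kappa>_pos by (simp_all add: power2_eq_square)
    ultimately show ?thesis
      by linarith
  next
    case 4
    have "ln (\<kappa> / 4) \<le> ln t"
      using 4 \<kappa>_pos by simp
    then have "t\<^sup>2 * (- ln t) \<le> t\<^sup>2 * (- ln \<kappa> + 3)"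
      using \<kappa>_pos ln4 by (intro mult_left_mono) (auto simp: ln_div)
    moreover have "t\<^sup>2 * ln \<kappa> \<le> t\<^sup>2 * (- 6)"
      using \<kappa>_small by (intro mult_left_mono) auto
    moreover have "\<kappa> * \<kappa> \<le> 4 * (\<kappa> * t)" and "0 \<le> \<kappa> * t"
      using 4 \<kappa>_pos by simp_all
    ultimately show ?thesis
      using F1_eq_small[OF 4(1,2)] F1_eq_large[OF \<kappa>_pos 4(3)]
      by (simp add: power2_eq_square algebra_simps)
  qed
qed

lemma Delta2_F1: "Delta2 (F1 \<kappa>)"
  unfolding Delta2_def by (intro exI[of _ 4]) (auto intro: F1_doubling)

lemma Delta2_conjugate_F1: "Delta2 (conjugate (F1 \<kappa>))"
  by (rule Delta2_conjugateI[of 4]) (use F1_quadrupling_growth F1_nonneg F1_superlinear in auto)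

end

end

theorem proposition3p1:
  shows "\<exists>\<kappa>\<^sub>0>0. \<forall>\<kappa>. 0 < \<kappa> \<and> \<kappa> < \<kappa>\<^sub>0 \<longrightarrow>
           N_function (F1 \<kappa>) \<and> Delta2 (F1 \<kappa>) \<and> Delta2 (conjugate (F1 \<kappa>))"
proof (intro exI[of _ "exp (- 6)"] conjI allI impI)
  fix \<kappa> :: real
  assume "0 < \<kappa> \<and> \<kappa> < exp (- 6)"
  then have "0 < \<kappa>" and "ln \<kappa> < - 6"
    using ln_less_cancel_iff[of \<kappa> "exp (- 6)"] by auto
  then show "N_function (F1 \<kappa>)" and "Delta2 (F1 \<kappa>)" and "Delta2 (conjugate (F1 \<kappa>))"
    by (simp_all add: N_function_F1 Delta2_F1 Delta2_conjugate_F1)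
qed simp

end
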